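(* Let $0\le\eta<1$, $m\in\mathbb{N}$, $n\in\mathbb{N}_0$, $m>n$. If $f_1,f_2\in\overline{S}H(m,n,\eta)$ and $0\le\mu\le1$, then $\mu f_1+(1-\mu)f_2\in\overline{S}H(m,n,\eta)$.
   Context: Fix real parameters $\alpha,\beta,\gamma,\delta>0$ and $p,q>0$ with $q\le \alpha+p$. For an integer $m\ge 0$ define $C_1(m)=1$ and, for $k\ge 2$, $$C_k(m)=\frac{(m+1)_{k-1}}{(k-1)!}\cdot\frac{\Gamma(\gamma+q(k-1))/\Gamma(\gamma)}{\Gamma(\beta+\alpha(k-1))\,\Gamma(\delta+p(k-1))/\Gamma(\delta)},$$ where $(x)_j=\Gamma(x+j)/\Gamma(x)$. For analytic $\varphi(z)=\sum_{k\ge1}c_kz^k$ on $U=\{|z|<1\}$ set $\Phi^m\varphi(z)=\sum_{k\ge1}C_k(m)c_kz^k$, and for harmonic $f=h+\overline{g}$ set $\Phi^m f=\Phi^m h+(-1)^m\overline{\Phi^m g}$. The class $SH(m,n,\eta)$ consists of harmonic $f=h+\overline g$, univalent and sense-preserving in $U$, with $h(z)=z+\sum_{k\ge2}a_kz^k$, $g(z)=\sum_{k\ge1}b_kz^k$, $|b_1|<1$, and $\operatorname{Re}\bigl(\Phi^m f/\Phi^n f\bigr)>\eta$ in $U$. The class $\overline{S}H(m,n,\eta)$ consists of those $f_m=h+\overline{g_m}\in SH(m,n,\eta)$ with $h(z)=z-\sum_{k\ge2}a_kz^k$, $g_m(z)=(-1)^{m-1}\sum_{k\ge1}b_kz^k$,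 $a_k,b_k\ge0$. *)

theory Defs
  imports "HOL-Analysis.Analysis"
begin

abbreviation unit_disc :: "complex set" where "unit_disc \<equiv> ball 0 1"

text \<open>The multiplier C_k(m), depending on the fixed parameters
  alpha beta gamma delta p q. C_0(m) := 0 (index 0 is never used, all
  coefficient sequences vanish at 0), C_1(m) = 1.\<close>
definition Ccoef :: "real \<Rightarrow> real \<Rightarrow> real \<Rightarrow> real \<Rightarrow> real \<Rightarrow> real \<Rightarrow> nat \<Rightarrow> nat \<Rightarrow> real" where
  "Ccoef \<alpha> \<beta> \<gamma> \<delta> p q m k =
     (if k = 0 then 0 else if k = 1 then 1 else
       (pochhammer (real m + 1) (k - 1) / fact (k - 1)) *
       ((Gamma (\<gamma> + q * real (k - 1)) / Gamma \<gamma>) /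
        (Gamma (\<beta> + \<alpha> * real (k - 1)) * Gamma (\<delta> + p * real (k - 1)) / Gamma \<delta>)))"

definition pser :: "(nat \<Rightarrow> complex) \<Rightarrow> complex \<Rightarrow> complex" where
  "pser c z = (\<Sum>k. c k * z ^ k)"

definition PhiA :: "real \<Rightarrow> real \<Rightarrow> real \<Rightarrow> real \<Rightarrow> real \<Rightarrow> real \<Rightarrow> nat \<Rightarrow>
    (nat \<Rightarrow> complex) \<Rightarrow> complex \<Rightarrow> complex" where
  "PhiA \<alpha> \<beta> \<gamma> \<delta> p q m c z = pser (\<lambda>k. complex_of_real (Ccoef \<alpha> \<beta> \<gamma> \<delta> p q m k) * c k) z"

definition hfun :: "(nat \<Rightarrow> complex) \<Rightarrow> (nat \<Rightarrow> complex) \<Rightarrow> complex \<Rightarrow> complex" where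
  "hfun A B z = pser A z + cnj (pser B z)"

definition PhiH :: "real \<Rightarrow> real \<Rightarrow> real \<Rightarrow> real \<Rightarrow> real \<Rightarrow> real \<Rightarrow> nat \<Rightarrow>
    (nat \<Rightarrow> complex) \<Rightarrow> (nat \<Rightarrow> complex) \<Rightarrow> complex \<Rightarrow> complex" where
  "PhiH \<alpha> \<beta> \<gamma> \<delta> p q m A B z =
     PhiA \<alpha> \<beta> \<gamma> \<delta> p q m A z + (-1) ^ m * cnj (PhiA \<alpha> \<beta> \<gamma> \<delta> p q m B z)"

definition SHc :: "real \<Rightarrow> real \<Rightarrow> real \<Rightarrow> real \<Rightarrow> real \<Rightarrow> real \<Rightarrow> nat \<Rightarrow> nat \<Rightarrow> real \<Rightarrow>
    (nat \<Rightarrow> complex) \<Rightarrow> (nat \<Rightarrow> complex) \<Rightarrow> bool" where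
  "SHc \<alpha> \<beta> \<gamma> \<delta> p q m n \<eta> A B \<longleftrightarrow>
     A 0 = 0 \<and> A 1 = 1 \<and> B 0 = 0 \<and> norm (B 1) < 1 \<and>
     (\<forall>z\<in>unit_disc. summable (\<lambda>k. A k * z ^ k) \<and> summable (\<lambda>k. B k * z ^ k)) \<and>
     (\<forall>z\<in>unit_disc. \<forall>j\<in>{m, n}.
        summable (\<lambda>k. complex_of_real (Ccoef \<alpha> \<beta> \<gamma> \<delta> p q j k) * A k * z ^ k) \<and>
        summable (\<lambda>k. complex_of_real (Ccoef \<alpha> \<beta> \<gamma> \<delta> p q j k) * B k * z ^ k)) \<and>
     inj_on (hfun A B) unit_disc \<and>
     (\<forall>z\<in>unit_disc. norm (deriv (pser B) z) < norm (deriv (pser A) z)) \<and>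
     (\<forall>z\<in>unit_disc. z \<noteq> 0 \<longrightarrow>
        Re (PhiH \<alpha> \<beta> \<gamma> \<delta> p q m A B z / PhiH \<alpha> \<beta> \<gamma> \<delta> p q n A B z) > \<eta>)"

text \<open>The class SH-bar(m,n,eta): functions F which on U equal h + conj g_m with
  h(z) = z - sum_{k>=2} a_k z^k, g_m(z) = (-1)^(m-1) sum_{k>=1} b_k z^k,
  a_k, b_k >= 0, and h + conj g_m in SH(m,n,eta).\<close>
definition SHbar :: "real \<Rightarrow> real \<Rightarrow> real \<Rightarrow> real \<Rightarrow> real \<Rightarrow> real \<Rightarrow> nat \<Rightarrow> nat \<Rightarrow> real \<Rightarrow>
    (complex \<Rightarrow> complex) \<Rightarrow> bool" where
  "SHbar \<alpha> \<beta> \<gamma> \<delta> p q m n \<eta> F \<longleftrightarrow>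
     (\<exists>a b :: nat \<Rightarrow> real. (\<forall>k. a k \<ge> 0 \<and> b k \<ge> 0) \<and>
        (let A = (\<lambda>k. if k = 1 then 1 else if k \<ge> 2 then - complex_of_real (a k) else 0);
             B = (\<lambda>k. if k \<ge> 1 then complex_of_real ((-1) ^ (m - 1) * b k) else 0)
         in SHc \<alpha> \<beta> \<gamma> \<delta> p q m n \<eta> A B \<and> (\<forall>z\<in>unit_disc. F z = hfun A B z)))"

end

theory Submission
  imports Defs
begin

(*
  Write f = h + conj g with h(z) = z - sum_k a_k z^k and g(z) = s sum_k b_k z^k, where a_k, b_k >= 0
  and s = (-1)^(m-1).  Because all coefficients have one sign, the triangle inequality is sharp on the
  positive radius, and membership of f in SH-bar(m,n,eta) is equivalent to two inequalities between
  power series evaluated at real r in [0,1):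
    sum_k k a_k r^(k-1) + sum_k k b_k r^(k-1) < 1,
    sum_k (C_k(m) - eta C_k(n)) a_k r^k + sum_k (C_k(m) + eta (-1)^(m-1+n) C_k(n)) b_k r^k < (1 - eta) r.
  Necessity evaluates h', g' and Phi^m f / Phi^n f on the radius, where an intermediate value argument
  fixes the signs; sufficiency bounds every quantity at |z| = r by these radial series (this also gives
  univalence, via a Lipschitz estimate).  Both inequalities are affine in (a, b), hence the class is
  convex.
*)

section \<open>Power series with real coefficients on the unit disc\<close>

definition real_powser :: "(nat \<Rightarrow> real) \<Rightarrow> 'a::{real_normed_field,banach} \<Rightarrow> 'a" where
  "real_powser c z = (\<Sum>k. of_real (c k) * z ^ k)"

lemma conv_radius_of_real [simp]:
  "conv_radius (\<lambda>k. of_real (c k) :: 'a::{real_normed_div_algebra,banach}) = conv_radius c"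
  by (simp add: conv_radius_def)

lemma one_le_conv_radius_iff:
  "1 \<le> conv_radius c \<longleftrightarrow>
     (\<forall>z::'a::{real_normed_field,banach}. norm z < 1 \<longrightarrow> summable (\<lambda>k. of_real (c k) * z ^ k))"
  using le_conv_radius_iff[of 1 "\<lambda>k. of_real (c k) :: 'a" 0] by (simp add: one_ereal_def)

lemma real_powser_sums:
  fixes z :: "'a::{real_normed_field,banach}"
  assumes "1 \<le> conv_radius c" "norm z < 1"
  shows "(\<lambda>k. of_real (c k) * z ^ k) sums real_powser c z"
  unfolding real_powser_def using assms one_le_conv_radius_iff by (blast intro: summable_sums)

lemma real_powser_of_real:
  assumes "1 \<le> conv_radius c" "\<bar>r\<bar> < 1"
  shows "real_powser c (of_real r :: 'a::{real_normed_field,banach}) = of_real (real_powser c r)"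
proof -
  have "(\<lambda>k. of_real (c k * r ^ k) :: 'a) sums of_real (real_powser c r)"
    using real_powser_sums[OF assms(1), of r] assms(2) by (intro sums_of_real) simp
  then show ?thesis
    using real_powser_sums[OF assms(1), of "of_real r :: 'a"] assms(2) by (simp add: sums_unique2)
qed

lemma real_powser_zero [simp]: "real_powser c 0 = of_real (c 0)"
  unfolding real_powser_def using powser_zero[of "\<lambda>k. of_real (c k)"] by simp

lemma real_powser_lincomb:
  fixes z :: "'a::{real_normed_field,banach}"
  assumes "1 \<le> conv_radius c" "1 \<le> conv_radius d" "norm z < 1"
  shows "real_powser (\<lambda>k. x * c k + y * d k) z = of_real x * real_powser c z + of_real y * real_powser d z"
proof -
  have "(\<lambda>k. of_real x * (of_real (c k) * z ^ k) + of_real y * (of_real (d k) * z ^ k)) sums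
          (of_real x * real_powser c z + of_real y * real_powser d z)"
    using assms by (intro sums_add sums_mult real_powser_sums)
  then show ?thesis
    unfolding real_powser_def by (simp add: sums_iff algebra_simps)
qed

lemma conv_radius_lincomb:
  fixes c d :: "nat \<Rightarrow> real"
  assumes "1 \<le> conv_radius c" "1 \<le> conv_radius d"
  shows "1 \<le> conv_radius (\<lambda>k. x * c k + y * d k)"
  unfolding one_le_conv_radius_iff[where 'a=complex]
proof (intro allI impI)
  fix z :: complex assume "norm z < 1"
  then have "summable (\<lambda>k. of_real (c k) * z ^ k)" "summable (\<lambda>k. of_real (d k) * z ^ k)"
    using assms one_le_conv_radius_iff[where 'a=complex] by blast+
  then have "summable (\<lambda>k. of_real x * (of_real (c k) * z ^ k) + of_real y * (of_real (d k) * z ^ k))"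
    by (intro summable_add summable_mult)
  then show "summable (\<lambda>k. of_real (x * c k + y * d k) * z ^ k)"
    by (simp add: algebra_simps)
qed

lemma conv_radius_weighted:
  fixes cm cn x :: "nat \<Rightarrow> real"
  assumes "1 \<le> conv_radius (\<lambda>k. cm k * x k)" "1 \<le> conv_radius (\<lambda>k. cn k * x k)"
  shows "1 \<le> conv_radius (\<lambda>k. (cm k + t * cn k) * x k)"
  using conv_radius_lincomb[OF assms, of 1 t] by (simp add: algebra_simps)

lemma real_powser_weighted:
  fixes z :: "'a::{real_normed_field,banach}"
  assumes "1 \<le> conv_radius (\<lambda>k. cm k * x k)" "1 \<le> conv_radius (\<lambda>k. cn k * x k)" "norm z < 1"
  shows "real_powser (\<lambda>k. (cm k + t * cn k) * x k) z =
    real_powser (\<lambda>k. cm k * x k) z + of_real t * real_powser (\<lambda>k. cn k * x k) z"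
  using real_powser_lincomb[OF assms, of 1 t] by (simp add: algebra_simps)

lemma real_powser_sum_convex:
  fixes r :: real
  assumes "1 \<le> conv_radius c1" "1 \<le> conv_radius c2" "1 \<le> conv_radius d1" "1 \<le> conv_radius d2" "\<bar>r\<bar> < 1"
    and "real_powser c1 r + real_powser d1 r < B" "real_powser c2 r + real_powser d2 r < B" "0 \<le> \<mu>" "\<mu> \<le> 1"
  shows "real_powser (\<lambda>k. \<mu> * c1 k + (1 - \<mu>) * c2 k) r + real_powser (\<lambda>k. \<mu> * d1 k + (1 - \<mu>) * d2 k) r < B"
proof -
  have "\<mu> * (real_powser c1 r + real_powser d1 r) + (1 - \<mu>) * (real_powser c2 r + real_powser d2 r) < B"
    using assms(6-9) by (intro convex_bound_lt) auto
  moreover have "norm r < 1"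
    using assms(5) by simp
  ultimately show ?thesis
    unfolding real_powser_lincomb[OF assms(1,2) \<open>norm r < 1\<close>] real_powser_lincomb[OF assms(3,4) \<open>norm r < 1\<close>]
    by (simp add: algebra_simps)
qed

lemma norm_real_powser_le:
  fixes z :: "'a::{real_normed_field,banach}"
  assumes "\<And>k. 0 \<le> c k" "1 \<le> conv_radius c" "norm z < 1"
  shows "norm (real_powser c z) \<le> real_powser c (norm z)"
proof -
  have "(\<lambda>k. norm (of_real (c k) * z ^ k)) sums real_powser c (norm z)"
    using real_powser_sums[OF assms(2), of "norm z"] assms by (simp add: norm_mult norm_power)
  then show ?thesis
    unfolding real_powser_def sums_iff by (metis summable_norm)
qed

lemma norm_real_powser_weighted_le:
  fixes z :: "'a::{real_normed_field,banach}"
  assumes "\<And>k. 0 \<le> cn k" "\<And>k. cn k \<le> cm k" "\<And>k. 0 \<le> x k" "\<bar>t\<bar> \<le> 1"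
    and "1 \<le> conv_radius (\<lambda>k. cm k * x k)" "1 \<le> conv_radius (\<lambda>k. cn k * x k)" "norm z < 1"
  shows "norm (real_powser (\<lambda>k. cm k * x k) z + of_real t * real_powser (\<lambda>k. cn k * x k) z)
    \<le> real_powser (\<lambda>k. cm k * x k) (norm z) + t * real_powser (\<lambda>k. cn k * x k) (norm z)"
proof -
  have "0 \<le> cm k + t * cn k" for k
  proof -
    have "- cn k \<le> t * cn k"
      using mult_right_mono[of "-1" t "cn k"] assms(1,4) by (simp add: abs_le_iff)
    then show ?thesis
      using assms(2)[of k] by linarith
  qed
  then have "\<And>k. 0 \<le> (cm k + t * cn k) * x k"
    using assms(3) by simp
  then have "norm (real_powser (\<lambda>k. (cm k + t * cn k) * x k) z) \<le>
      real_powser (\<lambda>k. (cm k + t * cn k) * x k) (norm z)"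
    using assms(7) by (intro norm_real_powser_le conv_radius_weighted assms(5,6))
  then show ?thesis
    using real_powser_weighted[OF assms(5,6), of z t] real_powser_weighted[OF assms(5,6), of "norm z" t] assms(7)
    by simp
qed

lemma real_powser_nonneg:
  fixes r :: real
  assumes "\<And>k. 0 \<le> c k" "1 \<le> conv_radius c" "0 \<le> r" "r < 1"
  shows "0 \<le> real_powser c r"
proof -
  have "(\<lambda>k. c k * r ^ k) sums real_powser c r"
    using real_powser_sums[OF assms(2), of r] assms(3,4) by simp
  then show ?thesis
    by (rule sums_le[OF _ sums_zero, rotated]) (simp add: assms)
qed

lemma real_powser_mono:
  fixes r s :: real
  assumes "\<And>k. 0 \<le> c k" "1 \<le> conv_radius c" "0 \<le> r" "r \<le> s" "s < 1"
  shows "real_powser c r \<le> real_powser c s"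
proof (rule sums_le)
  show "(\<lambda>k. c k * r ^ k) sums real_powser c r" "(\<lambda>k. c k * s ^ k) sums real_powser c s"
    using real_powser_sums[OF assms(2), of r] real_powser_sums[OF assms(2), of s] assms(3-5) by simp_all
  show "c k * r ^ k \<le> c k * s ^ k" for k
    using assms by (intro mult_left_mono power_mono) auto
qed

lemma conv_radius_diffs:
  fixes c :: "nat \<Rightarrow> real"
  assumes "1 \<le> conv_radius c"
  shows "1 \<le> conv_radius (diffs c)"
  unfolding one_le_conv_radius_iff[where 'a=real]
proof (intro allI impI)
  fix r :: real assume "norm r < 1"
  then show "summable (\<lambda>k. of_real (diffs c k) * r ^ k)"
    using termdiff_converges[where K=1 and c=c and x=r] assms one_le_conv_radius_iff[where 'a=real] by simp
qed

lemma has_field_derivative_real_powser: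
  fixes z :: "'a::{real_normed_field,banach}"
  assumes "1 \<le> conv_radius c" "norm z < 1"
  shows "(real_powser c has_field_derivative real_powser (diffs c) z) (at z within S)"
proof -
  have "ereal (norm z) < conv_radius c"
    using assms(2) by (intro less_le_trans[OF _ assms(1)]) simp
  moreover have "diffs (\<lambda>k. of_real (c k) :: 'a) = (\<lambda>k. of_real (diffs c k))"
    by (simp add: diffs_def fun_eq_iff)
  ultimately show ?thesis
    using has_field_derivative_powser[of z "\<lambda>k. of_real (c k) :: 'a"]
    unfolding real_powser_def[abs_def] by simp
qed

lemma isCont_real_powser:
  fixes z :: "'a::{real_normed_field,banach}"
  shows "1 \<le> conv_radius c \<Longrightarrow> norm z < 1 \<Longrightarrow> isCont (real_powser c) z"
  by (rule DERIV_isCont[OF has_field_derivative_real_powser])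

lemma real_powser_shift:
  fixes z :: "'a::{real_normed_field,banach}"
  assumes "1 \<le> conv_radius c" "norm z < 1"
  shows "real_powser c z = of_real (c 0) + real_powser (\<lambda>k. c (Suc k)) z * z"
  using powser_split_head(1)[OF sums_summable[OF real_powser_sums[OF assms]]]
  unfolding real_powser_def by simp

lemma conv_radius_shift_Suc:
  "conv_radius (\<lambda>k. c (Suc k)) = conv_radius (c :: nat \<Rightarrow> 'a::{banach,real_normed_div_algebra})"
  using conv_radius_shift[of c 1] by simp

lemma norm_real_powser_diff_le:
  fixes z w :: "'a::{real_normed_field,banach}"
  assumes "\<And>k. 0 \<le> c k" "1 \<le> conv_radius c" "norm z \<le> \<rho>" "norm w \<le> \<rho>" "\<rho> < 1"
  shows "norm (real_powser c z - real_powser c w) \<le> real_powser (diffs c) \<rho> * norm (z - w)"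
proof (rule field_differentiable_bound[of "cball 0 \<rho>"])
  fix u :: 'a assume "u \<in> cball 0 \<rho>"
  then have u: "norm u \<le> \<rho>" by simp
  have dc: "\<And>k. 0 \<le> diffs c k" "1 \<le> conv_radius (diffs c)"
    using assms(1) conv_radius_diffs[OF assms(2)] by (simp_all add: diffs_def)
  show "(real_powser c has_field_derivative real_powser (diffs c) u) (at u within cball 0 \<rho>)"
    using u assms by (intro has_field_derivative_real_powser) auto
  have "norm (real_powser (diffs c) u) \<le> real_powser (diffs c) (norm u)"
    using u assms by (intro norm_real_powser_le dc) auto
  also have "\<dots> \<le> real_powser (diffs c) \<rho>"
    using u assms by (intro real_powser_mono dc) auto
  finally show "norm (real_powser (diffs c) u) \<le> real_powser (diffs c) \<rho>" .
qed (use assms in auto)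

lemma pos_if_nonvanishing:
  fixes g :: "real \<Rightarrow> real"
  assumes "\<And>x. 0 \<le> x \<Longrightarrow> x < 1 \<Longrightarrow> isCont g x" "0 < g 0"
    and "\<And>x. 0 \<le> x \<Longrightarrow> x < 1 \<Longrightarrow> g x \<noteq> 0" "0 \<le> r" "r < 1"
  shows "0 < g r"
proof (rule ccontr)
  assume "\<not> 0 < g r"
  then obtain x where "0 \<le> x" "x \<le> r" "g x = 0"
    using IVT2[of g r 0 0] assms by force
  then show False
    using assms by force
qed

(* After division by r the function is continuous on [0,1) with value 1 - c 1 + t d 1 at 0. *)
lemma radial_pos_if_nonvanishing:
  fixes c d :: "nat \<Rightarrow> real"
  assumes "1 \<le> conv_radius c" "1 \<le> conv_radius d" "c 0 = 0" "d 0 = 0" "0 < 1 - c 1 + t * d 1"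
    and nonzero: "\<And>x. 0 < x \<Longrightarrow> x < 1 \<Longrightarrow> x - real_powser c x + t * real_powser d x \<noteq> 0"
    and "0 < r" "r < 1"
  shows "0 < r - real_powser c r + t * real_powser d r"
proof -
  define G where "G x = 1 - real_powser (\<lambda>k. c (Suc k)) x + t * real_powser (\<lambda>k. d (Suc k)) x" for x :: real
  have factor: "x - real_powser c x + t * real_powser d x = x * G x" if "0 \<le> x" "x < 1" for x
    using real_powser_shift[OF assms(1), of x] real_powser_shift[OF assms(2), of x] that assms(3,4)
    by (simp add: G_def algebra_simps)
  have "0 < G r"
  proof (rule pos_if_nonvanishing[of G])
    show "isCont G x" if "0 \<le> x" "x < 1" for x
      unfolding G_def[abs_def] using that assms(1,2)
      by (auto intro!: continuous_intros isCont_real_powser simp: conv_radius_shift_Suc)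
    show "0 < G 0"
      using assms(5) by (simp add: G_def)
    show "G x \<noteq> 0" if "0 \<le> x" "x < 1" for x
      using \<open>0 < G 0\<close> nonzero[of x] factor[OF that] that by (cases "x = 0") auto
  qed (use assms in auto)
  then show ?thesis
    using factor[of r] assms(7,8) by simp
qed

lemma Ccoef_0 [simp]: "Ccoef \<alpha> \<beta> \<gamma> \<delta> p q j 0 = 0"
  by (simp add: Ccoef_def)

lemma Ccoef_1 [simp]: "Ccoef \<alpha> \<beta> \<gamma> \<delta> p q j 1 = 1" "Ccoef \<alpha> \<beta> \<gamma> \<delta> p q j (Suc 0) = 1"
  by (simp_all add: Ccoef_def)

lemma Ccoef_eq_pochhammer:
  assumes "2 \<le> k"
  shows "Ccoef \<alpha> \<beta> \<gamma> \<delta> p q j k = pochhammer (real j + 1) (k - 1) / fact (k - 1) *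
    ((Gamma (\<gamma> + q * real (k - 1)) / Gamma \<gamma>) /
     (Gamma (\<beta> + \<alpha> * real (k - 1)) * Gamma (\<delta> + p * real (k - 1)) / Gamma \<delta>))"
  using assms by (simp add: Ccoef_def)

lemma Gamma_quotient_pos:
  assumes "\<alpha> > 0" "\<beta> > 0" "\<gamma> > 0" "\<delta> > 0" "p > 0" "q > 0"
  shows "0 < (Gamma (\<gamma> + q * real i) / Gamma \<gamma>) /
    (Gamma (\<beta> + \<alpha> * real i) * Gamma (\<delta> + p * real i) / Gamma \<delta>)"
  using assms by (intro divide_pos_pos mult_pos_pos Gamma_real_pos add_pos_nonneg) auto

lemma Ccoef_nonneg:
  assumes "\<alpha> > 0" "\<beta> > 0" "\<gamma> > 0" "\<delta> > 0" "p > 0" "q > 0"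
  shows "0 \<le> Ccoef \<alpha> \<beta> \<gamma> \<delta> p q j k"
proof (cases "2 \<le> k")
  case True
  have "0 \<le> pochhammer (real j + 1) (k - 1) / fact (k - 1)"
    by (intro divide_nonneg_pos pochhammer_nonneg) auto
  then show ?thesis
    unfolding Ccoef_eq_pochhammer[OF True]
    by (rule mult_nonneg_nonneg[OF _ less_imp_le[OF Gamma_quotient_pos[OF assms]]])
qed (auto simp: Ccoef_def)

lemma Ccoef_mono:
  assumes "\<alpha> > 0" "\<beta> > 0" "\<gamma> > 0" "\<delta> > 0" "p > 0" "q > 0" "n \<le> m"
  shows "Ccoef \<alpha> \<beta> \<gamma> \<delta> p q n k \<le> Ccoef \<alpha> \<beta> \<gamma> \<delta> p q m k"
proof (cases "2 \<le> k")
  case True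
  have "pochhammer (real n + 1) (k - 1) \<le> pochhammer (real m + 1) (k - 1)"
    unfolding pochhammer_prod using assms(7) by (intro prod_mono) auto
  then show ?thesis
    unfolding Ccoef_eq_pochhammer[OF True]
    by (rule mult_right_mono[OF divide_right_mono less_imp_le[OF Gamma_quotient_pos[OF assms(1-6)]]]) simp
qed (auto simp: Ccoef_def)

(* Taylor coefficients of h(z) = z - sum_k a_k z^k; those of the co-analytic part are written s * b_k. *)
definition hcoeffs :: "(nat \<Rightarrow> real) \<Rightarrow> nat \<Rightarrow> complex" where
  "hcoeffs a k = (if k = 1 then 1 else 0) - of_real (a k)"

lemma Ccoef_times_hcoeffs:
  "of_real (Ccoef \<alpha> \<beta> \<gamma> \<delta> p q j k) * hcoeffs a k = hcoeffs (\<lambda>k. Ccoef \<alpha> \<beta> \<gamma> \<delta> p q j k * a k) k"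
  by (cases "k = 1") (auto simp: hcoeffs_def Ccoef_def algebra_simps)

lemma hcoeffs_sums:
  assumes "1 \<le> conv_radius a" "norm z < 1"
  shows "(\<lambda>k. hcoeffs a k * z ^ k) sums (z - real_powser a z)"
proof -
  have "(\<lambda>k. (if k = 1 then z ^ k else 0) - of_real (a k) * z ^ k) sums (z ^ 1 - real_powser a z)"
    using assms by (intro sums_diff sums_single real_powser_sums)
  moreover have "(\<lambda>k. (if k = 1 then z ^ k else 0) - of_real (a k) * z ^ k) = (\<lambda>k. hcoeffs a k * z ^ k)"
    by (rule ext) (simp add: hcoeffs_def left_diff_distrib)
  ultimately show ?thesis
    by simp
qed

lemma scaled_real_powser_sums:
  assumes "1 \<le> conv_radius b" "norm z < 1"
  shows "(\<lambda>k. of_real (s * b k) * z ^ k) sums (of_real s * real_powser b z)"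
  using sums_mult[OF real_powser_sums[OF assms], of "of_real s"] by (simp add: mult.assoc)

lemma one_le_conv_radius_iff_hcoeffs:
  "1 \<le> conv_radius a \<longleftrightarrow> (\<forall>z\<in>unit_disc. summable (\<lambda>k. hcoeffs a k * z ^ k))"
proof
  assume "\<forall>z\<in>unit_disc. summable (\<lambda>k. hcoeffs a k * z ^ k)"
  then have "summable (\<lambda>k. (if k = 1 then z ^ k else 0) - hcoeffs a k * z ^ k)" if "norm z < 1" for z
    using that by (intro summable_diff summable_single) auto
  moreover have "(\<lambda>k. (if k = 1 then z ^ k else 0) - hcoeffs a k * z ^ k) = (\<lambda>k. of_real (a k) * z ^ k)" for z
    by (rule ext) (simp add: hcoeffs_def left_diff_distrib)
  ultimately show "1 \<le> conv_radius a"
    unfolding one_le_conv_radius_iff[where 'a=complex] by simp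
next
  assume "1 \<le> conv_radius a"
  then show "\<forall>z\<in>unit_disc. summable (\<lambda>k. hcoeffs a k * z ^ k)"
    using hcoeffs_sums sums_summable by (metis mem_ball_0)
qed

lemma one_le_conv_radius_iff_scaled:
  assumes "s \<noteq> 0"
  shows "1 \<le> conv_radius b \<longleftrightarrow> (\<forall>z\<in>unit_disc. summable (\<lambda>k. of_real (s * b k) * z ^ k))"
  using assms unfolding one_le_conv_radius_iff[where 'a=complex] by (simp add: mult.assoc Ball_def)

lemma pser_hcoeffs: "1 \<le> conv_radius a \<Longrightarrow> norm z < 1 \<Longrightarrow> pser (hcoeffs a) z = z - real_powser a z"
  unfolding pser_def by (rule sums_unique[symmetric, OF hcoeffs_sums])

lemma pser_scaled:
  "1 \<le> conv_radius b \<Longrightarrow> norm z < 1 \<Longrightarrow> pser (\<lambda>k. of_real (s * b k)) z = of_real s * real_powser b z"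
  unfolding pser_def by (rule sums_unique[symmetric, OF scaled_real_powser_sums])

lemma hfun_hcoeffs:
  assumes "1 \<le> conv_radius a" "1 \<le> conv_radius b" "norm z < 1"
  shows "hfun (hcoeffs a) (\<lambda>k. of_real (s * b k)) z = z - real_powser a z + of_real s * cnj (real_powser b z)"
  unfolding hfun_def pser_hcoeffs[OF assms(1,3)] pser_scaled[OF assms(2,3)] by simp

lemma PhiH_hcoeffs:
  assumes "1 \<le> conv_radius (\<lambda>k. Ccoef \<alpha> \<beta> \<gamma> \<delta> p q j k * a k)"
    and "1 \<le> conv_radius (\<lambda>k. Ccoef \<alpha> \<beta> \<gamma> \<delta> p q j k * b k)" and "norm z < 1"
  shows "PhiH \<alpha> \<beta> \<gamma> \<delta> p q j (hcoeffs a) (\<lambda>k. of_real (s * b k)) z =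
    z - real_powser (\<lambda>k. Ccoef \<alpha> \<beta> \<gamma> \<delta> p q j k * a k) z +
    of_real ((-1) ^ j * s) * cnj (real_powser (\<lambda>k. Ccoef \<alpha> \<beta> \<gamma> \<delta> p q j k * b k) z)"
proof -
  have coeffs: "(\<lambda>k. complex_of_real (Ccoef \<alpha> \<beta> \<gamma> \<delta> p q j k) * of_real (s * b k)) =
      (\<lambda>k. of_real (s * (Ccoef \<alpha> \<beta> \<gamma> \<delta> p q j k * b k)))"
    by (simp add: algebra_simps)
  show ?thesis
    unfolding PhiH_def PhiA_def Ccoef_times_hcoeffs coeffs pser_hcoeffs[OF assms(1,3)] pser_scaled[OF assms(2,3)]
    by simp
qed

lemma PhiH_SHbar_coeffs:
  assumes "1 \<le> m"
    and "1 \<le> conv_radius (\<lambda>k. Ccoef \<alpha> \<beta> \<gamma> \<delta> p q m k * a k)" "1 \<le> conv_radius (\<lambda>k. Ccoef \<alpha> \<beta> \<gamma> \<delta> p q m k * b k)"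
    and "1 \<le> conv_radius (\<lambda>k. Ccoef \<alpha> \<beta> \<gamma> \<delta> p q n k * a k)" "1 \<le> conv_radius (\<lambda>k. Ccoef \<alpha> \<beta> \<gamma> \<delta> p q n k * b k)"
    and "norm z < 1"
  shows "PhiH \<alpha> \<beta> \<gamma> \<delta> p q m (hcoeffs a) (\<lambda>k. of_real ((-1) ^ (m - 1) * b k)) z =
      z - real_powser (\<lambda>k. Ccoef \<alpha> \<beta> \<gamma> \<delta> p q m k * a k) z - cnj (real_powser (\<lambda>k. Ccoef \<alpha> \<beta> \<gamma> \<delta> p q m k * b k) z)"
      (is ?PhiH_m)
    and "PhiH \<alpha> \<beta> \<gamma> \<delta> p q n (hcoeffs a) (\<lambda>k. of_real ((-1) ^ (m - 1) * b k)) z =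
      z - real_powser (\<lambda>k. Ccoef \<alpha> \<beta> \<gamma> \<delta> p q n k * a k) z +
      of_real ((-1) ^ (m - 1 + n)) * cnj (real_powser (\<lambda>k. Ccoef \<alpha> \<beta> \<gamma> \<delta> p q n k * b k) z)"
      (is ?PhiH_n)
proof -
  have "(-1) ^ m * (-1) ^ (m - 1) = (-1 :: real)"
    using \<open>1 \<le> m\<close> by (cases m) auto
  then show ?PhiH_m ?PhiH_n
    using PhiH_hcoeffs[OF assms(2,3,6), of "(-1) ^ (m - 1)"] PhiH_hcoeffs[OF assms(4,5,6), of "(-1) ^ (m - 1)"]
    by (simp_all add: power_add mult.commute)
qed

lemma deriv_pser_hcoeffs:
  assumes "1 \<le> conv_radius a" "norm z < 1"
  shows "deriv (pser (hcoeffs a)) z = 1 - real_powser (diffs a) z"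
proof -
  have "((\<lambda>w. w - real_powser a w) has_field_derivative 1 - real_powser (diffs a) z) (at z)"
    using assms by (intro derivative_intros has_field_derivative_real_powser)
  then have "(pser (hcoeffs a) has_field_derivative 1 - real_powser (diffs a) z) (at z)"
    by (rule has_field_derivative_transform_within_open[of _ _ _ "ball 0 1"])
       (use assms pser_hcoeffs in auto)
  then show ?thesis
    by (rule DERIV_imp_deriv)
qed

lemma deriv_pser_scaled:
  assumes "1 \<le> conv_radius b" "norm z < 1"
  shows "deriv (pser (\<lambda>k. of_real (s * b k))) z = of_real s * real_powser (diffs b) z"
proof -
  have "((\<lambda>w. of_real s * real_powser b w) has_field_derivative of_real s * real_powser (diffs b) z) (at z)"
    by (rule DERIV_cmult[OF has_field_derivative_real_powser[OF assms]])
  then have "(pser (\<lambda>k. of_real (s * b k)) has_field_derivative of_real s * real_powser (diffs b) z) (at z)"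
    by (rule has_field_derivative_transform_within_open[of _ _ _ "ball 0 1"])
       (use assms pser_scaled in auto)
  then show ?thesis
    by (rule DERIV_imp_deriv)
qed

lemma SHc_summability_iff:
  assumes "s \<noteq> 0"
  shows "((\<forall>z\<in>unit_disc. summable (\<lambda>k. hcoeffs a k * z ^ k) \<and> summable (\<lambda>k. of_real (s * b k) * z ^ k)) \<and>
      (\<forall>z\<in>unit_disc. \<forall>j\<in>{m, n}.
        summable (\<lambda>k. complex_of_real (Ccoef \<alpha> \<beta> \<gamma> \<delta> p q j k) * hcoeffs a k * z ^ k) \<and>
        summable (\<lambda>k. complex_of_real (Ccoef \<alpha> \<beta> \<gamma> \<delta> p q j k) * of_real (s * b k) * z ^ k)))
    \<longleftrightarrow> 1 \<le> conv_radius a \<and> 1 \<le> conv_radius b \<and>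
      (\<forall>j\<in>{m, n}. 1 \<le> conv_radius (\<lambda>k. Ccoef \<alpha> \<beta> \<gamma> \<delta> p q j k * a k) \<and>
        1 \<le> conv_radius (\<lambda>k. Ccoef \<alpha> \<beta> \<gamma> \<delta> p q j k * b k))"
    (is "?lhs \<longleftrightarrow> _")
proof -
  have coeffs: "complex_of_real (Ccoef \<alpha> \<beta> \<gamma> \<delta> p q j k) * of_real (s * b k) =
      of_real (s * (Ccoef \<alpha> \<beta> \<gamma> \<delta> p q j k * b k))" for j k
    by simp
  have "?lhs
    \<longleftrightarrow> (\<forall>z\<in>unit_disc. summable (\<lambda>k. hcoeffs a k * z ^ k)) \<and>
      (\<forall>z\<in>unit_disc. summable (\<lambda>k. of_real (s * b k) * z ^ k)) \<and>
      (\<forall>j\<in>{m, n}. (\<forall>z\<in>unit_disc. summable (\<lambda>k. hcoeffs (\<lambda>k. Ccoef \<alpha> \<beta> \<gamma> \<delta> p q j k * a k) k * z ^ k)) \<and>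
        (\<forall>z\<in>unit_disc. summable (\<lambda>k. of_real (s * (Ccoef \<alpha> \<beta> \<gamma> \<delta> p q j k * b k)) * z ^ k)))"
    unfolding Ccoef_times_hcoeffs coeffs by blast
  then show ?thesis
    by (simp only: one_le_conv_radius_iff_hcoeffs[symmetric] one_le_conv_radius_iff_scaled[OF assms, symmetric])
qed

section \<open>The radial coefficient condition\<close>

(* The coefficient inequalities of the paper, evaluated along the radius: for 0 <= r < 1 they express
   h'(r) > |g'(r)| and, with tau = (-1)^(m-1+n), Re (Phi^m f / Phi^n f)(r) > eta.  Unlike the conditions
   defining SH they are affine in (a, b). *)
definition radial_coeff_condition ::
    "(nat \<Rightarrow> real) \<Rightarrow> (nat \<Rightarrow> real) \<Rightarrow> real \<Rightarrow> real \<Rightarrow> (nat \<Rightarrow> real) \<Rightarrow> (nat \<Rightarrow> real) \<Rightarrow> bool" where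
  "radial_coeff_condition cm cn \<eta> \<tau> a b \<longleftrightarrow>
     (\<forall>k. 0 \<le> a k \<and> 0 \<le> b k) \<and>
     1 \<le> conv_radius a \<and> 1 \<le> conv_radius b \<and>
     1 \<le> conv_radius (\<lambda>k. cm k * a k) \<and> 1 \<le> conv_radius (\<lambda>k. cm k * b k) \<and>
     1 \<le> conv_radius (\<lambda>k. cn k * a k) \<and> 1 \<le> conv_radius (\<lambda>k. cn k * b k) \<and>
     (\<forall>r::real. 0 \<le> r \<and> r < 1 \<longrightarrow> real_powser (diffs a) r + real_powser (diffs b) r < 1) \<and>
     (\<forall>r::real. 0 < r \<and> r < 1 \<longrightarrow>
        real_powser (\<lambda>k. (cm k - \<eta> * cn k) * a k) r +
        real_powser (\<lambda>k. (cm k + \<eta> * \<tau> * cn k) * b k) r < (1 - \<eta>) * r)"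

lemma radial_coeff_condition_convex:
  assumes cond1: "radial_coeff_condition cm cn \<eta> \<tau> a1 b1"
    and cond2: "radial_coeff_condition cm cn \<eta> \<tau> a2 b2" and "0 \<le> \<mu>" "\<mu> \<le> 1"
  shows "radial_coeff_condition cm cn \<eta> \<tau> (\<lambda>k. \<mu> * a1 k + (1 - \<mu>) * a2 k) (\<lambda>k. \<mu> * b1 k + (1 - \<mu>) * b2 k)"
proof -
  define mix where "mix x1 x2 = (\<lambda>k. \<mu> * x1 k + (1 - \<mu>) * x2 k)" for x1 x2 :: "nat \<Rightarrow> real"
  have mix_weighted: "(\<lambda>k. w k * mix x1 x2 k) = mix (\<lambda>k. w k * x1 k) (\<lambda>k. w k * x2 k)" for w x1 x2
    by (simp add: mix_def fun_eq_iff algebra_simps)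
  have mix_diffs: "diffs (mix x1 x2) = mix (diffs x1) (diffs x2)" for x1 x2
    by (simp add: mix_def diffs_def fun_eq_iff algebra_simps)
  have radii: "1 \<le> conv_radius (\<lambda>k. w k * x k)"
    if "x \<in> {a1, a2, b1, b2}" and "w \<in> {\<lambda>_. 1, cm, cn, \<lambda>k. cm k - \<eta> * cn k, \<lambda>k. cm k + \<eta> * \<tau> * cn k}"
    for w x
    using that cond1 cond2 conv_radius_weighted[of cm x cn "- \<eta>"] conv_radius_weighted[of cm x cn "\<eta> * \<tau>"]
    unfolding radial_coeff_condition_def by auto
  then have base_radii: "1 \<le> conv_radius x" "1 \<le> conv_radius (diffs x)" if "x \<in> {a1, a2, b1, b2}" for x
    using that radii[OF that, of "\<lambda>_. 1"] by (simp_all add: conv_radius_diffs)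
  have mix_radii: "1 \<le> conv_radius (mix (\<lambda>k. w k * x1 k) (\<lambda>k. w k * x2 k))"
    if "x1 \<in> {a1, a2, b1, b2}" "x2 \<in> {a1, a2, b1, b2}" "w \<in> {\<lambda>_. 1, cm, cn}" for w x1 x2
    unfolding mix_def using that by (intro conv_radius_lincomb radii base_radii) auto
  show ?thesis
    unfolding radial_coeff_condition_def mix_def[symmetric] mix_weighted mix_diffs
  proof (intro conjI allI impI)
    show "0 \<le> mix a1 a2 k" "0 \<le> mix b1 b2 k" for k
      using cond1 cond2 \<open>0 \<le> \<mu>\<close> \<open>\<mu> \<le> 1\<close> unfolding radial_coeff_condition_def mix_def by auto
  next
    fix r :: real
    assume "0 \<le> r \<and> r < 1"
    then show "real_powser (mix (diffs a1) (diffs a2)) r + real_powser (mix (diffs b1) (diffs b2)) r < 1"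
      using cond1 cond2 \<open>0 \<le> \<mu>\<close> \<open>\<mu> \<le> 1\<close> unfolding radial_coeff_condition_def mix_def
      by (intro real_powser_sum_convex) (auto intro: radii base_radii)
  next
    fix r :: real
    assume "0 < r \<and> r < 1"
    then show "real_powser (mix (\<lambda>k. (cm k - \<eta> * cn k) * a1 k) (\<lambda>k. (cm k - \<eta> * cn k) * a2 k)) r +
        real_powser (mix (\<lambda>k. (cm k + \<eta> * \<tau> * cn k) * b1 k) (\<lambda>k. (cm k + \<eta> * \<tau> * cn k) * b2 k)) r
        < (1 - \<eta>) * r"
      using cond1 cond2 \<open>0 \<le> \<mu>\<close> \<open>\<mu> \<le> 1\<close> unfolding radial_coeff_condition_def mix_def
      by (intro real_powser_sum_convex) (auto intro: radii base_radii)
  qed (use mix_radii[of _ _ "\<lambda>_. 1"] mix_radii in simp_all)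
qed

section \<open>Necessity of the radial condition\<close>

lemma conv_radius_if_SHc:
  assumes "SHc \<alpha> \<beta> \<gamma> \<delta> p q m n \<eta> (hcoeffs a) (\<lambda>k. of_real (s * b k))" and "s \<noteq> 0"
  shows "1 \<le> conv_radius a \<and> 1 \<le> conv_radius b \<and>
      (\<forall>j\<in>{m, n}. 1 \<le> conv_radius (\<lambda>k. Ccoef \<alpha> \<beta> \<gamma> \<delta> p q j k * a k) \<and>
        1 \<le> conv_radius (\<lambda>k. Ccoef \<alpha> \<beta> \<gamma> \<delta> p q j k * b k))"
  using assms(1) unfolding SHc_def SHc_summability_iff[OF assms(2), symmetric] by (elim conjE) (intro conjI)

lemma diffs_bound_if_SHc:
  fixes r :: real
  assumes SH: "SHc \<alpha> \<beta> \<gamma> \<delta> p q m n \<eta> (hcoeffs a) (\<lambda>k. of_real (s * b k))"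
    and "\<bar>s\<bar> = 1" "\<And>k. 0 \<le> b k" "1 \<le> conv_radius a" "1 \<le> conv_radius b" "0 \<le> r" "r < 1"
  shows "real_powser (diffs a) r + real_powser (diffs b) r < 1"
proof -
  have "a 1 = 0"
    using SH by (simp add: SHc_def hcoeffs_def)
  have da: "1 \<le> conv_radius (diffs a)" and db: "1 \<le> conv_radius (diffs b)"
    using assms(4,5) by (auto intro: conv_radius_diffs)
  have db_nonneg: "0 \<le> real_powser (diffs b) x" if "0 \<le> x" "x < 1" for x :: real
    using that assms(3) by (intro real_powser_nonneg db) (simp add: diffs_def)
  have sense: "real_powser (diffs b) x < \<bar>1 - real_powser (diffs a) x\<bar>" if "0 \<le> x" "x < 1" for x :: real
  proof -
    have "norm (deriv (pser (\<lambda>k. of_real (s * b k))) (of_real x)) < norm (deriv (pser (hcoeffs a)) (of_real x))"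
      using SH that unfolding SHc_def by simp
    then have "norm (of_real s * real_powser (diffs b) (complex_of_real x)) <
        norm (1 - real_powser (diffs a) (complex_of_real x))"
      using that deriv_pser_hcoeffs[OF assms(4), of "of_real x"] deriv_pser_scaled[OF assms(5), of "of_real x" s]
      by simp
    moreover have "norm (1 - complex_of_real y) = \<bar>1 - y\<bar>" for y
      using norm_of_real[of "1 - y"] by simp
    ultimately show ?thesis
      using that db_nonneg[OF that] assms(2) real_powser_of_real[OF da, where 'a=complex]
        real_powser_of_real[OF db, where 'a=complex]
      by (simp add: norm_mult)
  qed
  have "0 < 1 - real_powser (diffs a) r"
  proof (rule pos_if_nonvanishing[of "\<lambda>x. 1 - real_powser (diffs a) x"])
    show "isCont (\<lambda>x. 1 - real_powser (diffs a) x) x" if "0 \<le> x" "x < 1" for x :: real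
      using that by (intro continuous_intros isCont_real_powser da) simp
    show "1 - real_powser (diffs a) x \<noteq> 0" if "0 \<le> x" "x < 1" for x :: real
      using sense[OF that] db_nonneg[OF that] by auto
  qed (use \<open>a 1 = 0\<close> assms(6,7) in \<open>simp_all add: diffs_def\<close>)
  then show ?thesis
    using sense[OF assms(6,7)] by simp
qed

lemma radial_ratio_if_SHc:
  fixes x :: real
  assumes SH: "SHc \<alpha> \<beta> \<gamma> \<delta> p q m n \<eta> (hcoeffs a) (\<lambda>k. of_real ((-1) ^ (m - 1) * b k))"
    and "1 \<le> m"
    and "1 \<le> conv_radius (\<lambda>k. Ccoef \<alpha> \<beta> \<gamma> \<delta> p q m k * a k)" "1 \<le> conv_radius (\<lambda>k. Ccoef \<alpha> \<beta> \<gamma> \<delta> p q m k * b k)"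
    and "1 \<le> conv_radius (\<lambda>k. Ccoef \<alpha> \<beta> \<gamma> \<delta> p q n k * a k)" "1 \<le> conv_radius (\<lambda>k. Ccoef \<alpha> \<beta> \<gamma> \<delta> p q n k * b k)"
    and "0 < x" "x < 1"
  shows "\<eta> < (x - real_powser (\<lambda>k. Ccoef \<alpha> \<beta> \<gamma> \<delta> p q m k * a k) x - real_powser (\<lambda>k. Ccoef \<alpha> \<beta> \<gamma> \<delta> p q m k * b k) x) /
    (x - real_powser (\<lambda>k. Ccoef \<alpha> \<beta> \<gamma> \<delta> p q n k * a k) x +
      (-1) ^ (m - 1 + n) * real_powser (\<lambda>k. Ccoef \<alpha> \<beta> \<gamma> \<delta> p q n k * b k) x)"
proof -
  have x: "norm (complex_of_real x) < 1" "\<bar>x\<bar> < 1"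
    using assms(7,8) by auto
  have "\<eta> < Re (PhiH \<alpha> \<beta> \<gamma> \<delta> p q m (hcoeffs a) (\<lambda>k. of_real ((-1) ^ (m - 1) * b k)) (of_real x) /
      PhiH \<alpha> \<beta> \<gamma> \<delta> p q n (hcoeffs a) (\<lambda>k. of_real ((-1) ^ (m - 1) * b k)) (of_real x))"
    using SH x(1) \<open>0 < x\<close> unfolding SHc_def by simp
  then show ?thesis
    unfolding PhiH_SHbar_coeffs[OF assms(2-6) x(1)] real_powser_of_real[OF assms(3) x(2)]
      real_powser_of_real[OF assms(4) x(2)] real_powser_of_real[OF assms(5) x(2)] real_powser_of_real[OF assms(6) x(2)]
    by (simp flip: of_real_divide)
qed

lemma weighted_bound_if_SHc:
  fixes r :: real
  assumes SH: "SHc \<alpha> \<beta> \<gamma> \<delta> p q m n \<eta> (hcoeffs a) (\<lambda>k. of_real ((-1) ^ (m - 1) * b k))"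
    and "0 \<le> \<eta>" "1 \<le> m"
    and "1 \<le> conv_radius (\<lambda>k. Ccoef \<alpha> \<beta> \<gamma> \<delta> p q m k * a k)" "1 \<le> conv_radius (\<lambda>k. Ccoef \<alpha> \<beta> \<gamma> \<delta> p q m k * b k)"
    and "1 \<le> conv_radius (\<lambda>k. Ccoef \<alpha> \<beta> \<gamma> \<delta> p q n k * a k)" "1 \<le> conv_radius (\<lambda>k. Ccoef \<alpha> \<beta> \<gamma> \<delta> p q n k * b k)"
    and "0 < r" "r < 1"
  shows "real_powser (\<lambda>k. (Ccoef \<alpha> \<beta> \<gamma> \<delta> p q m k - \<eta> * Ccoef \<alpha> \<beta> \<gamma> \<delta> p q n k) * a k) r +
    real_powser (\<lambda>k. (Ccoef \<alpha> \<beta> \<gamma> \<delta> p q m k + \<eta> * (-1) ^ (m - 1 + n) * Ccoef \<alpha> \<beta> \<gamma> \<delta> p q n k) * b k) r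
    < (1 - \<eta>) * r"
proof -
  define cm where "cm = Ccoef \<alpha> \<beta> \<gamma> \<delta> p q m"
  define cn where "cn = Ccoef \<alpha> \<beta> \<gamma> \<delta> p q n"
  define \<tau> :: real where "\<tau> = (-1) ^ (m - 1 + n)"
  define P where "P x = x - real_powser (\<lambda>k. cm k * a k) x - real_powser (\<lambda>k. cm k * b k) x" for x :: real
  define Q where "Q x = x - real_powser (\<lambda>k. cn k * a k) x + \<tau> * real_powser (\<lambda>k. cn k * b k) x" for x :: real
  have ratio: "\<eta> < P x / Q x" if "0 < x" "x < 1" for x
    using radial_ratio_if_SHc[OF SH assms(3-7) that] by (simp add: P_def Q_def cm_def cn_def \<tau>_def)
  have "a 1 = 0" "\<bar>b 1\<bar> < 1"
    using SH by (simp_all add: SHc_def hcoeffs_def norm_mult norm_power)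
  then have "0 < 1 - cn 1 * a 1 + \<tau> * (cn 1 * b 1)"
    by (cases "even (m - 1 + n)") (auto simp: cn_def \<tau>_def)
  moreover have "Q x \<noteq> 0" if "0 < x" "x < 1" for x
    using ratio[OF that] \<open>0 \<le> \<eta>\<close> by auto
  ultimately have "0 < Q r"
    unfolding Q_def using assms(6-9) by (intro radial_pos_if_nonvanishing) (auto simp: cn_def Q_def)
  then have "\<eta> * Q r < P r"
    using ratio[OF assms(8,9)] by (simp add: pos_less_divide_eq mult.commute)
  then show ?thesis
    using real_powser_weighted[OF assms(4,6), of r "- \<eta>"] real_powser_weighted[OF assms(5,7), of r "\<eta> * \<tau>"]
      assms(8,9)
    by (simp add: P_def Q_def cm_def cn_def \<tau>_def algebra_simps)
qed

lemma radial_coeff_condition_if_SHc: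
  assumes SH: "SHc \<alpha> \<beta> \<gamma> \<delta> p q m n \<eta> (hcoeffs a) (\<lambda>k. of_real ((-1) ^ (m - 1) * b k))"
    and "0 \<le> \<eta>" "1 \<le> m" "\<forall>k. 0 \<le> a k \<and> 0 \<le> b k"
  shows "radial_coeff_condition (Ccoef \<alpha> \<beta> \<gamma> \<delta> p q m) (Ccoef \<alpha> \<beta> \<gamma> \<delta> p q n) \<eta> ((-1) ^ (m - 1 + n)) a b"
proof -
  have "(-1) ^ (m - 1) \<noteq> (0 :: real)" "\<bar>(-1) ^ (m - 1)\<bar> = (1 :: real)"
    by simp_all
  note radii = conv_radius_if_SHc[OF SH this(1)]
  show ?thesis
    unfolding radial_coeff_condition_def
    using assms radii diffs_bound_if_SHc[OF SH \<open>\<bar>(-1) ^ (m - 1)\<bar> = 1\<close>]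
      weighted_bound_if_SHc[OF SH \<open>0 \<le> \<eta>\<close> \<open>1 \<le> m\<close>]
    by (simp add: mult.assoc)
qed

section \<open>Sufficiency of the radial condition\<close>

lemma inj_on_hfun_hcoeffs:
  assumes "\<And>k. 0 \<le> a k" "\<And>k. 0 \<le> b k" "1 \<le> conv_radius a" "1 \<le> conv_radius b" "\<bar>s\<bar> = 1"
    and diffs_bound: "\<And>r::real. 0 \<le> r \<Longrightarrow> r < 1 \<Longrightarrow> real_powser (diffs a) r + real_powser (diffs b) r < 1"
  shows "inj_on (hfun (hcoeffs a) (\<lambda>k. of_real (s * b k))) unit_disc"
proof (rule inj_onI, rule ccontr)
  fix z w assume "z \<in> unit_disc" "w \<in> unit_disc" "z \<noteq> w"
    and eq: "hfun (hcoeffs a) (\<lambda>k. of_real (s * b k)) z = hfun (hcoeffs a) (\<lambda>k. of_real (s * b k)) w"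
  define \<rho> where "\<rho> = max (norm z) (norm w)"
  have \<rho>: "norm z \<le> \<rho>" "norm w \<le> \<rho>" "0 \<le> \<rho>" "\<rho> < 1"
    using \<open>z \<in> unit_disc\<close> \<open>w \<in> unit_disc\<close> by (auto simp: \<rho>_def le_max_iff_disj)
  have zw: "norm z < 1" "norm w < 1"
    using \<rho> by auto
  have "z - real_powser a z + of_real s * cnj (real_powser b z) =
      w - real_powser a w + of_real s * cnj (real_powser b w)"
    using eq hfun_hcoeffs[OF assms(3,4) zw(1), of s] hfun_hcoeffs[OF assms(3,4) zw(2), of s] by simp
  then have "z - w = (real_powser a z - real_powser a w) - of_real s * cnj (real_powser b z - real_powser b w)"
    by (simp add: algebra_simps)
  then have "norm (z - w) \<le>
      norm (real_powser a z - real_powser a w) + norm (of_real s * cnj (real_powser b z - real_powser b w))"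
    by (subst \<open>z - w = _\<close>) (rule norm_triangle_ineq4)
  also have "\<dots> = norm (real_powser a z - real_powser a w) + norm (real_powser b z - real_powser b w)"
    using assms(5) by (simp add: norm_mult del: complex_cnj_diff)
  also have "\<dots> \<le> (real_powser (diffs a) \<rho> + real_powser (diffs b) \<rho>) * norm (z - w)"
    using norm_real_powser_diff_le[OF assms(1,3) \<rho>(1,2,4)] norm_real_powser_diff_le[OF assms(2,4) \<rho>(1,2,4)]
    by (simp add: distrib_right)
  also have "\<dots> < norm (z - w)"
    using diffs_bound[OF \<rho>(3,4)] \<open>z \<noteq> w\<close> by simp
  finally show False
    by simp
qed

lemma sense_preserving_hcoeffs:
  assumes "\<And>k. 0 \<le> a k" "\<And>k. 0 \<le> b k" "1 \<le> conv_radius a" "1 \<le> conv_radius b" "\<bar>s\<bar> = 1"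
    and diffs_bound: "\<And>r::real. 0 \<le> r \<Longrightarrow> r < 1 \<Longrightarrow> real_powser (diffs a) r + real_powser (diffs b) r < 1"
    and "norm z < 1"
  shows "norm (deriv (pser (\<lambda>k. of_real (s * b k))) z) < norm (deriv (pser (hcoeffs a)) z)"
proof -
  have "\<And>k. 0 \<le> diffs a k" "\<And>k. 0 \<le> diffs b k"
    using assms(1,2) by (simp_all add: diffs_def)
  note nonneg = this and radii = conv_radius_diffs[OF assms(3)] conv_radius_diffs[OF assms(4)]
  have "norm (deriv (pser (\<lambda>k. of_real (s * b k))) z) = norm (real_powser (diffs b) z)"
    using deriv_pser_scaled[OF assms(4,7), of s] assms(5) by (simp add: norm_mult)
  also have "\<dots> \<le> real_powser (diffs b) (norm z)"
    by (rule norm_real_powser_le[OF nonneg(2) radii(2) assms(7)])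
  also have "\<dots> < 1 - real_powser (diffs a) (norm z)"
    using diffs_bound[of "norm z"] assms(7) by simp
  also have "\<dots> \<le> 1 - norm (real_powser (diffs a) z)"
    using norm_real_powser_le[OF nonneg(1) radii(1) assms(7)] by simp
  also have "\<dots> \<le> norm (deriv (pser (hcoeffs a)) z)"
    using deriv_pser_hcoeffs[OF assms(3,7)] norm_triangle_ineq2[of 1 "real_powser (diffs a) z"]
    by (simp add: norm_minus_commute)
  finally show ?thesis .
qed

(* The hypothesis says that P / Q is closer to 1 than to 2 eta - 1. *)
lemma Re_divide_gt_if_norm_less:
  fixes P Q :: complex
  assumes "norm (P - Q) < norm (P + of_real (1 - 2 * \<eta>) * Q)" "\<eta> < 1"
  shows "\<eta> < Re (P / Q)"
proof -
  have "Q \<noteq> 0"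
    using assms(1) by auto
  define w where "w = P / Q"
  have "norm Q * norm (w - 1) < norm Q * norm (w + of_real (1 - 2 * \<eta>))"
    using assms(1) \<open>Q \<noteq> 0\<close> by (simp add: w_def norm_mult[symmetric] algebra_simps)
  then have "(norm (w - 1))\<^sup>2 < (norm (w + of_real (1 - 2 * \<eta>)))\<^sup>2"
    using \<open>Q \<noteq> 0\<close> by (intro power_strict_mono) auto
  then have "(Re w - 1)\<^sup>2 < (Re w + (1 - 2 * \<eta>))\<^sup>2"
    unfolding cmod_power2 by simp
  then have "0 < 4 * (1 - \<eta>) * (Re w - \<eta>)"
    by (simp add: power2_eq_square algebra_simps)
  then show ?thesis
    using assms(2) by (simp add: w_def zero_less_mult_iff)
qed

lemma Re_quotient_gt_if_norm_bounds:
  fixes z U1 U2 V1 V2 :: complex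
  assumes "\<eta> < 1"
    and "norm (U1 - U2) \<le> A1 - A2"
    and "norm (V1 + of_real \<tau> * V2) \<le> B1 + \<tau> * B2"
    and "norm (U1 + of_real (1 - 2 * \<eta>) * U2) \<le> A1 + (1 - 2 * \<eta>) * A2"
    and "norm (V1 - of_real (\<tau> * (1 - 2 * \<eta>)) * V2) \<le> B1 - \<tau> * (1 - 2 * \<eta>) * B2"
    and "A1 - \<eta> * A2 + (B1 + \<eta> * \<tau> * B2) < (1 - \<eta>) * norm z"
  shows "\<eta> < Re ((z - U1 - cnj V1) / (z - U2 + of_real \<tau> * cnj V2))"
proof (rule Re_divide_gt_if_norm_less[OF _ assms(1)])
  define P where "P = z - U1 - cnj V1"
  define Q where "Q = z - U2 + of_real \<tau> * cnj V2"
  have "P - Q = - (U1 - U2) - cnj (V1 + of_real \<tau> * V2)"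
    by (simp add: P_def Q_def algebra_simps)
  then have "norm (P - Q) \<le> norm (U1 - U2) + norm (V1 + of_real \<tau> * V2)"
    using norm_triangle_ineq4[of "- (U1 - U2)" "cnj (V1 + of_real \<tau> * V2)"]
    by (simp only: norm_minus_cancel complex_mod_cnj)
  have "P + of_real (1 - 2 * \<eta>) * Q = of_real (2 * (1 - \<eta>)) * z -
      (U1 + of_real (1 - 2 * \<eta>) * U2) - cnj (V1 - of_real (\<tau> * (1 - 2 * \<eta>)) * V2)"
    by (simp add: P_def Q_def algebra_simps)
  then have "norm (of_real (2 * (1 - \<eta>)) * z) - norm (U1 + of_real (1 - 2 * \<eta>) * U2) -
      norm (V1 - of_real (\<tau> * (1 - 2 * \<eta>)) * V2) \<le> norm (P + of_real (1 - 2 * \<eta>) * Q)"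
    using norm_triangle_ineq2[of "of_real (2 * (1 - \<eta>)) * z" "U1 + of_real (1 - 2 * \<eta>) * U2"]
      norm_triangle_ineq2[of "of_real (2 * (1 - \<eta>)) * z - (U1 + of_real (1 - 2 * \<eta>) * U2)"
        "cnj (V1 - of_real (\<tau> * (1 - 2 * \<eta>)) * V2)"]
    by (simp only: complex_mod_cnj)
  moreover have "norm (of_real (2 * (1 - \<eta>)) * z) = 2 * (1 - \<eta>) * norm z"
    using assms(1) by (simp only: norm_mult norm_of_real) simp
  ultimately show "norm (P - Q) < norm (P + of_real (1 - 2 * \<eta>) * Q)"
    using \<open>norm (P - Q) \<le> _\<close> assms(2-6) by (simp add: algebra_simps)
qed

lemma Re_quotient_gt_if_radial_bound:
  fixes z :: complex and cm cn a b :: "nat \<Rightarrow> real"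
  assumes "\<And>k. 0 \<le> cn k" "\<And>k. cn k \<le> cm k" "\<And>k. 0 \<le> a k" "\<And>k. 0 \<le> b k" "\<bar>\<tau>\<bar> = 1" "0 \<le> \<eta>" "\<eta> < 1"
    and radii: "1 \<le> conv_radius (\<lambda>k. cm k * a k)" "1 \<le> conv_radius (\<lambda>k. cn k * a k)"
      "1 \<le> conv_radius (\<lambda>k. cm k * b k)" "1 \<le> conv_radius (\<lambda>k. cn k * b k)"
    and "norm z < 1"
    and bound: "real_powser (\<lambda>k. (cm k - \<eta> * cn k) * a k) (norm z) +
      real_powser (\<lambda>k. (cm k + \<eta> * \<tau> * cn k) * b k) (norm z) < (1 - \<eta>) * norm z"
  shows "\<eta> < Re ((z - real_powser (\<lambda>k. cm k * a k) z - cnj (real_powser (\<lambda>k. cm k * b k) z)) /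
    (z - real_powser (\<lambda>k. cn k * a k) z + of_real \<tau> * cnj (real_powser (\<lambda>k. cn k * b k) z)))"
proof (rule Re_quotient_gt_if_norm_bounds[OF \<open>\<eta> < 1\<close>])
  have weights: "\<bar>-1\<bar> \<le> (1::real)" "\<bar>\<tau>\<bar> \<le> 1" "\<bar>1 - 2 * \<eta>\<bar> \<le> 1" "\<bar>- (\<tau> * (1 - 2 * \<eta>))\<bar> \<le> 1"
    using assms(5-7) by (simp_all add: abs_mult)
  note weighted_le = norm_real_powser_weighted_le[OF assms(1,2,3) _ radii(1,2) \<open>norm z < 1\<close>]
    norm_real_powser_weighted_le[OF assms(1,2,4) _ radii(3,4) \<open>norm z < 1\<close>]
  show "norm (real_powser (\<lambda>k. cm k * a k) z - real_powser (\<lambda>k. cn k * a k) z) \<le>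
      real_powser (\<lambda>k. cm k * a k) (norm z) - real_powser (\<lambda>k. cn k * a k) (norm z)"
    using weighted_le(1)[OF weights(1)] by simp
  show "norm (real_powser (\<lambda>k. cm k * b k) z + of_real \<tau> * real_powser (\<lambda>k. cn k * b k) z) \<le>
      real_powser (\<lambda>k. cm k * b k) (norm z) + \<tau> * real_powser (\<lambda>k. cn k * b k) (norm z)"
    using weighted_le(2)[OF weights(2)] by simp
  show "norm (real_powser (\<lambda>k. cm k * a k) z + of_real (1 - 2 * \<eta>) * real_powser (\<lambda>k. cn k * a k) z) \<le>
      real_powser (\<lambda>k. cm k * a k) (norm z) + (1 - 2 * \<eta>) * real_powser (\<lambda>k. cn k * a k) (norm z)"
    using weighted_le(1)[OF weights(3)] by simp
  show "norm (real_powser (\<lambda>k. cm k * b k) z -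
        of_real (\<tau> * (1 - 2 * \<eta>)) * real_powser (\<lambda>k. cn k * b k) z) \<le>
      real_powser (\<lambda>k. cm k * b k) (norm z) - \<tau> * (1 - 2 * \<eta>) * real_powser (\<lambda>k. cn k * b k) (norm z)"
    using weighted_le(2)[OF weights(4)] by simp
  show "real_powser (\<lambda>k. cm k * a k) (norm z) - \<eta> * real_powser (\<lambda>k. cn k * a k) (norm z) +
      (real_powser (\<lambda>k. cm k * b k) (norm z) + \<eta> * \<tau> * real_powser (\<lambda>k. cn k * b k) (norm z))
      < (1 - \<eta>) * norm z"
    using bound real_powser_weighted[OF radii(1,2), of "norm z" "- \<eta>"]
      real_powser_weighted[OF radii(3,4), of "norm z" "\<eta> * \<tau>"] \<open>norm z < 1\<close>
    by simp
qed

lemma SHc_if_radial_coeff_condition: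
  assumes "\<alpha> > 0" "\<beta> > 0" "\<gamma> > 0" "\<delta> > 0" "p > 0" "q > 0"
    and "0 \<le> \<eta>" "\<eta> < 1" "1 \<le> m" "n \<le> m" "a 0 = 0" "a 1 = 0" "b 0 = 0"
    and cond: "radial_coeff_condition (Ccoef \<alpha> \<beta> \<gamma> \<delta> p q m) (Ccoef \<alpha> \<beta> \<gamma> \<delta> p q n) \<eta> ((-1) ^ (m - 1 + n)) a b"
  shows "SHc \<alpha> \<beta> \<gamma> \<delta> p q m n \<eta> (hcoeffs a) (\<lambda>k. of_real ((-1) ^ (m - 1) * b k))"
proof -
  define s :: real where "s = (-1) ^ (m - 1)"
  have s: "s \<noteq> 0" "\<bar>s\<bar> = 1" "\<bar>(-1) ^ (m - 1 + n)\<bar> = (1::real)"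
    by (simp_all add: s_def)
  from cond have nonneg: "\<And>k. 0 \<le> a k" "\<And>k. 0 \<le> b k"
    and radii: "1 \<le> conv_radius a" "1 \<le> conv_radius b"
      "1 \<le> conv_radius (\<lambda>k. Ccoef \<alpha> \<beta> \<gamma> \<delta> p q m k * a k)" "1 \<le> conv_radius (\<lambda>k. Ccoef \<alpha> \<beta> \<gamma> \<delta> p q n k * a k)"
      "1 \<le> conv_radius (\<lambda>k. Ccoef \<alpha> \<beta> \<gamma> \<delta> p q m k * b k)" "1 \<le> conv_radius (\<lambda>k. Ccoef \<alpha> \<beta> \<gamma> \<delta> p q n k * b k)"
    and diffs_bound: "\<And>r::real. 0 \<le> r \<Longrightarrow> r < 1 \<Longrightarrow> real_powser (diffs a) r + real_powser (diffs b) r < 1"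
    and bound: "\<And>r::real. 0 < r \<Longrightarrow> r < 1 \<Longrightarrow>
      real_powser (\<lambda>k. (Ccoef \<alpha> \<beta> \<gamma> \<delta> p q m k - \<eta> * Ccoef \<alpha> \<beta> \<gamma> \<delta> p q n k) * a k) r +
      real_powser (\<lambda>k. (Ccoef \<alpha> \<beta> \<gamma> \<delta> p q m k + \<eta> * (-1) ^ (m - 1 + n) * Ccoef \<alpha> \<beta> \<gamma> \<delta> p q n k) * b k) r
      < (1 - \<eta>) * r"
    unfolding radial_coeff_condition_def by auto
  have "b 1 < 1"
    using diffs_bound[of 0] \<open>a 1 = 0\<close> by (simp add: diffs_def)
  have "\<eta> < Re (PhiH \<alpha> \<beta> \<gamma> \<delta> p q m (hcoeffs a) (\<lambda>k. of_real (s * b k)) z /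
      PhiH \<alpha> \<beta> \<gamma> \<delta> p q n (hcoeffs a) (\<lambda>k. of_real (s * b k)) z)" if "norm z < 1" "z \<noteq> 0" for z
    unfolding s_def PhiH_SHbar_coeffs[OF \<open>1 \<le> m\<close> radii(3,5,4,6) \<open>norm z < 1\<close>]
    using that bound[of "norm z"]
    by (intro Re_quotient_gt_if_radial_bound Ccoef_nonneg Ccoef_mono assms(1-8,10) nonneg radii s(3)) auto
  moreover have "inj_on (hfun (hcoeffs a) (\<lambda>k. of_real (s * b k))) unit_disc"
    by (rule inj_on_hfun_hcoeffs[OF nonneg radii(1,2) s(2) diffs_bound])
  moreover have "norm (deriv (pser (\<lambda>k. of_real (s * b k))) z) < norm (deriv (pser (hcoeffs a)) z)"
    if "norm z < 1" for z
    by (rule sense_preserving_hcoeffs[OF nonneg radii(1,2) s(2) diffs_bound that])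
  moreover note SHc_summability_iff[OF s(1), of a b m n, THEN iffD2]
  ultimately show ?thesis
    using \<open>a 0 = 0\<close> \<open>a 1 = 0\<close> \<open>b 0 = 0\<close> \<open>b 1 < 1\<close> nonneg(2)[of 1] s(2) radii
    unfolding SHc_def s_def[symmetric] by (simp add: hcoeffs_def norm_mult)
qed

lemma SHbar_imp_radial_coeff_condition:
  assumes "0 \<le> \<eta>" "1 \<le> m" "SHbar \<alpha> \<beta> \<gamma> \<delta> p q m n \<eta> F"
  obtains a b where "a 0 = 0" "a 1 = 0" "b 0 = 0"
    "radial_coeff_condition (Ccoef \<alpha> \<beta> \<gamma> \<delta> p q m) (Ccoef \<alpha> \<beta> \<gamma> \<delta> p q n) \<eta> ((-1) ^ (m - 1 + n)) a b"
    "\<forall>z\<in>unit_disc. F z = z - real_powser a z + of_real ((-1) ^ (m - 1)) * cnj (real_powser b z)"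
proof -
  obtain a b where nonneg: "\<forall>k. 0 \<le> a k \<and> 0 \<le> b k"
    and SH: "SHc \<alpha> \<beta> \<gamma> \<delta> p q m n \<eta> (\<lambda>k. if k = 1 then 1 else if 2 \<le> k then - complex_of_real (a k) else 0)
      (\<lambda>k. if 1 \<le> k then complex_of_real ((-1) ^ (m - 1) * b k) else 0)"
    and F: "\<forall>z\<in>unit_disc. F z = hfun (\<lambda>k. if k = 1 then 1 else if 2 \<le> k then - complex_of_real (a k) else 0)
      (\<lambda>k. if 1 \<le> k then complex_of_real ((-1) ^ (m - 1) * b k) else 0) z"
    using \<open>SHbar \<alpha> \<beta> \<gamma> \<delta> p q m n \<eta> F\<close> unfolding SHbar_def Let_def by blast
  \<comment> \<open>SH-bar ignores a 0, a 1 and b 0, so these entries of the witnesses are junk.\<close>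
  define a' where "a' k = (if 2 \<le> k then a k else 0)" for k
  define b' where "b' k = (if 1 \<le> k then b k else 0)" for k
  have coeffs: "(\<lambda>k. if k = 1 then 1 else if 2 \<le> k then - complex_of_real (a k) else 0) = hcoeffs a'"
    "(\<lambda>k. if 1 \<le> k then complex_of_real ((-1) ^ (m - 1) * b k) else 0) = (\<lambda>k. of_real ((-1) ^ (m - 1) * b' k))"
    by (auto simp: fun_eq_iff hcoeffs_def a'_def b'_def)
  have "\<forall>k. 0 \<le> a' k \<and> 0 \<le> b' k"
    using nonneg by (simp add: a'_def b'_def)
  then have cond: "radial_coeff_condition (Ccoef \<alpha> \<beta> \<gamma> \<delta> p q m) (Ccoef \<alpha> \<beta> \<gamma> \<delta> p q n) \<eta> ((-1) ^ (m - 1 + n)) a' b'"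
    by (rule radial_coeff_condition_if_SHc[OF SH[unfolded coeffs] assms(1,2)])
  then have "1 \<le> conv_radius a'" "1 \<le> conv_radius b'"
    unfolding radial_coeff_condition_def by auto
  then have "\<forall>z\<in>unit_disc. F z = z - real_powser a' z + of_real ((-1) ^ (m - 1)) * cnj (real_powser b' z)"
    using F hfun_hcoeffs[where s="(-1) ^ (m - 1)"] unfolding coeffs by simp
  moreover have "a' 0 = 0" "a' 1 = 0" "b' 0 = 0"
    by (simp_all add: a'_def b'_def)
  ultimately show thesis
    using cond that by blast
qed

lemma SHbar_if_radial_coeff_condition:
  assumes "\<alpha> > 0" "\<beta> > 0" "\<gamma> > 0" "\<delta> > 0" "p > 0" "q > 0" "0 \<le> \<eta>" "\<eta> < 1" "1 \<le> m" "n \<le> m"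
    and "a 0 = 0" "a 1 = 0" "b 0 = 0"
    and cond: "radial_coeff_condition (Ccoef \<alpha> \<beta> \<gamma> \<delta> p q m) (Ccoef \<alpha> \<beta> \<gamma> \<delta> p q n) \<eta> ((-1) ^ (m - 1 + n)) a b"
    and F: "\<forall>z\<in>unit_disc. F z = z - real_powser a z + of_real ((-1) ^ (m - 1)) * cnj (real_powser b z)"
  shows "SHbar \<alpha> \<beta> \<gamma> \<delta> p q m n \<eta> F"
  unfolding SHbar_def Let_def
proof (rule exI[of _ a], rule exI[of _ b], intro conjI)
  have coeffs: "(\<lambda>k. if k = 1 then 1 else if 2 \<le> k then - complex_of_real (a k) else 0) = hcoeffs a"
    "(\<lambda>k. if 1 \<le> k then complex_of_real ((-1) ^ (m - 1) * b k) else 0) = (\<lambda>k. of_real ((-1) ^ (m - 1) * b k))"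
    using \<open>a 0 = 0\<close> \<open>a 1 = 0\<close> \<open>b 0 = 0\<close> by (auto simp: fun_eq_iff hcoeffs_def not_le less_2_cases_iff)
  have radii: "1 \<le> conv_radius a" "1 \<le> conv_radius b" and nonneg: "\<forall>k. 0 \<le> a k \<and> 0 \<le> b k"
    using cond unfolding radial_coeff_condition_def by auto
  show "\<forall>k. 0 \<le> a k \<and> 0 \<le> b k"
    by (rule nonneg)
  show "SHc \<alpha> \<beta> \<gamma> \<delta> p q m n \<eta> (\<lambda>k. if k = 1 then 1 else if 2 \<le> k then - complex_of_real (a k) else 0)
      (\<lambda>k. if 1 \<le> k then complex_of_real ((-1) ^ (m - 1) * b k) else 0)"
    unfolding coeffs by (rule SHc_if_radial_coeff_condition[OF assms(1-13) cond])
  show "\<forall>z\<in>unit_disc. F z = hfun (\<lambda>k. if k = 1 then 1 else if 2 \<le> k then - complex_of_real (a k) else 0)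
      (\<lambda>k. if 1 \<le> k then complex_of_real ((-1) ^ (m - 1) * b k) else 0) z"
    unfolding coeffs using F hfun_hcoeffs[where s="(-1) ^ (m - 1)"] radii by simp
qed

theorem corollary4p3:
  fixes \<alpha> \<beta> \<gamma> \<delta> p q \<eta> \<mu> :: real and m n :: nat
    and f1 f2 :: "complex \<Rightarrow> complex"
  assumes "\<alpha> > 0" "\<beta> > 0" "\<gamma> > 0" "\<delta> > 0" "p > 0" "q > 0" "q \<le> \<alpha> + p"
    and "0 \<le> \<eta>" "\<eta> < 1" "m \<ge> 1" "m > n"
    and "SHbar \<alpha> \<beta> \<gamma> \<delta> p q m n \<eta> f1" "SHbar \<alpha> \<beta> \<gamma> \<delta> p q m n \<eta> f2"
    and "0 \<le> \<mu>" "\<mu> \<le> 1"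
  shows "SHbar \<alpha> \<beta> \<gamma> \<delta> p q m n \<eta> (\<lambda>z. complex_of_real \<mu> * f1 z + complex_of_real (1 - \<mu>) * f2 z)"
proof -
  define cond where "cond = radial_coeff_condition (Ccoef \<alpha> \<beta> \<gamma> \<delta> p q m) (Ccoef \<alpha> \<beta> \<gamma> \<delta> p q n) \<eta> ((-1) ^ (m - 1 + n))"
  define f where "f a b z = z - real_powser a z + of_real ((-1) ^ (m - 1)) * cnj (real_powser b z)" for a b z
  obtain a1 b1 where "a1 0 = 0" "a1 1 = 0" "b1 0 = 0" "cond a1 b1" and f1: "\<forall>z\<in>unit_disc. f1 z = f a1 b1 z"
    by (rule SHbar_imp_radial_coeff_condition[OF assms(8,10,12), folded cond_def f_def])
  obtain a2 b2 where "a2 0 = 0" "a2 1 = 0" "b2 0 = 0" "cond a2 b2" and f2: "\<forall>z\<in>unit_disc. f2 z = f a2 b2 z"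
    by (rule SHbar_imp_radial_coeff_condition[OF assms(8,10,13), folded cond_def f_def])
  define a where "a = (\<lambda>k. \<mu> * a1 k + (1 - \<mu>) * a2 k)"
  define b where "b = (\<lambda>k. \<mu> * b1 k + (1 - \<mu>) * b2 k)"
  have "cond a b"
    using radial_coeff_condition_convex \<open>cond a1 b1\<close> \<open>cond a2 b2\<close> assms(14,15) by (simp add: cond_def a_def b_def)
  have radii: "1 \<le> conv_radius a1" "1 \<le> conv_radius a2" "1 \<le> conv_radius b1" "1 \<le> conv_radius b2"
    using \<open>cond a1 b1\<close> \<open>cond a2 b2\<close> unfolding cond_def radial_coeff_condition_def by auto
  have "f a b z = of_real \<mu> * f a1 b1 z + of_real (1 - \<mu>) * f a2 b2 z" if "norm z < 1" for z
    unfolding f_def a_def b_def real_powser_lincomb[OF radii(1,2) that] real_powser_lincomb[OF radii(3,4) that]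
    by (simp add: algebra_simps)
  then have "\<forall>z\<in>unit_disc. of_real \<mu> * f1 z + of_real (1 - \<mu>) * f2 z = f a b z"
    using f1 f2 by simp
  then show ?thesis
    using \<open>cond a b\<close> \<open>a1 0 = 0\<close> \<open>a2 0 = 0\<close> \<open>a1 1 = 0\<close> \<open>a2 1 = 0\<close> \<open>b1 0 = 0\<close> \<open>b2 0 = 0\<close>
    by (intro SHbar_if_radial_coeff_condition[OF assms(1-6,8-10) less_imp_le[OF \<open>m > n\<close>], of a b])
       (simp_all add: cond_def f_def a_def b_def)
qed

end
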